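(* The Finsleroid Indicatrix $\{R\in V_N: K(g;R)=1\}$ is a closed (compact, without boundary), regular hypersurface of $V_N$, and it is strongly convex, i.e. it bounds a convex body and its second fundamental form (with respect to the inward normal and the Euclidean structure of $V_N$) is positive definite at every point.
   Context: Let $N\ge2$, $V_N=\mathbb{R}^N$ with points $R=(R^1,\dots,R^N)$, $Z=R^N$; indices $a,b$ run over $1,\dots,N-1$, repeated indices summed. Fix a symmetric positive-definite matrix $(r_{ab})$, $q(R)=\sqrt{r_{ab}R^aR^b}$. Fix $g\in(-2,2)$, $h=\sqrt{1-g^2/4}$, $G=g/h$. Define $B(g;R)=Z^2+gqZ+q^2$, $A(g;R)=Z+\frac12gq$, $\Phi(g;R)=\arctan(A/(hq))$ for $q>0$ ($\Phi=\pm\pi/2$ if $q=0$, $Z\gtrless0$), $J=e^{\frac12G\Phi}$, and the Finsleroid metric function $K(g;R)=\sqrt{B}\,J$ ($K(g;0)=0$). *)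

theory Defs
  imports "HOL-Analysis.Analysis"
begin

text \<open>Setting: V_N = real^'n with N = CARD('n) >= 2. A distinguished index z :: 'n
  plays the role of the coordinate R^N = Z; the remaining indices (the set -{z})
  play the role of a, b = 1..N-1. The matrix (r_ab) is r :: 'n => 'n => real,
  only used on indices different from z.\<close>

definition sym_posdef_off :: "'n \<Rightarrow> ('n::finite \<Rightarrow> 'n \<Rightarrow> real) \<Rightarrow> bool" where
  "sym_posdef_off z r \<longleftrightarrow>
     (\<forall>a b. a \<noteq> z \<longrightarrow> b \<noteq> z \<longrightarrow> r a b = r b a) \<and>
     (\<forall>x::'n \<Rightarrow> real. (\<exists>a. a \<noteq> z \<and> x a \<noteq> 0) \<longrightarrow>
        (\<Sum>a\<in>-{z}. \<Sum>b\<in>-{z}. r a b * x a * x b) > 0)"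

definition fq :: "'n \<Rightarrow> ('n::finite \<Rightarrow> 'n \<Rightarrow> real) \<Rightarrow> real^'n \<Rightarrow> real" where
  "fq z r R = sqrt (\<Sum>a\<in>-{z}. \<Sum>b\<in>-{z}. r a b * R$a * R$b)"

definition fh :: "real \<Rightarrow> real" where "fh g = sqrt (1 - g\<^sup>2 / 4)"
definition fG :: "real \<Rightarrow> real" where "fG g = g / fh g"

definition fB :: "'n \<Rightarrow> ('n::finite \<Rightarrow> 'n \<Rightarrow> real) \<Rightarrow> real \<Rightarrow> real^'n \<Rightarrow> real" where
  "fB z r g R = (R$z)\<^sup>2 + g * fq z r R * R$z + (fq z r R)\<^sup>2"

definition fA :: "'n \<Rightarrow> ('n::finite \<Rightarrow> 'n \<Rightarrow> real) \<Rightarrow> real \<Rightarrow> real^'n \<Rightarrow> real" where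
  "fA z r g R = R$z + g * fq z r R / 2"

definition fPhi :: "'n \<Rightarrow> ('n::finite \<Rightarrow> 'n \<Rightarrow> real) \<Rightarrow> real \<Rightarrow> real^'n \<Rightarrow> real" where
  "fPhi z r g R =
     (if fq z r R > 0 then arctan (fA z r g R / (fh g * fq z r R))
      else if R$z > 0 then pi / 2 else - (pi / 2))"

definition fJ :: "'n \<Rightarrow> ('n::finite \<Rightarrow> 'n \<Rightarrow> real) \<Rightarrow> real \<Rightarrow> real^'n \<Rightarrow> real" where
  "fJ z r g R = exp (fG g * fPhi z r g R / 2)"

definition finsleroid_K :: "'n \<Rightarrow> ('n::finite \<Rightarrow> 'n \<Rightarrow> real) \<Rightarrow> real \<Rightarrow> real^'n \<Rightarrow> real" where
  "finsleroid_K z r g R = (if R = 0 then 0 else sqrt (fB z r g R) * fJ z r g R)"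

text \<open>Second fundamental form of a level set {F = c} at x, in direction of a tangent
  vector v, with respect to the unit normal -(grad F x)/|grad F x| and the Euclidean
  structure, where grad is the gradient of F and hess x the Jacobian matrix of grad
  at x (the Hessian of F): II(v,v) = v . (Hess F v) / |grad F|.\<close>
definition level_sff :: "(real^'n \<Rightarrow> real^'n) \<Rightarrow> (real^'n \<Rightarrow> real^'n^'n) \<Rightarrow> real^'n \<Rightarrow> real^'n \<Rightarrow> real" where
  "level_sff grad hess x v = (v \<bullet> (hess x *v v)) / norm (grad x)"

end

theory Submission
  imports Defs
begin

text \<open>
  At p \<noteq> 0 the gradient of K is (K p / B p) W p, where W p = r p + (Z + g q) e_Z and
  (r p)_a = r_ab p^b. In the polar coordinates h q = sqrt B cos Phi, A = sqrt B sin Phi, the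
  Cauchy-Schwarz inequality for r bounds x . grad K p by
  sqrt (B x) exp (G Phi p / 2) (cos d + (G/2) sin d) with d = Phi x - Phi p, |d| \<le> pi,
  and cos d + k sin d \<le> exp (k d) gives x . grad K p \<le> K x. With Euler's identity
  p . grad K p = K p this exhibits K as a supremum of linear forms, hence convex; being
  positively homogeneous and positive on the unit sphere, K has compact sublevel sets whose
  boundary is the indicatrix.

  K is smooth off the Z-axis, where the gradient and Hessian are computed explicitly. The
  Hessian has one term of order 1/q, which is in fact O(q), so the derivatives extend
  continuously to the Z-axis, and a mean value argument along segments leaving the axis
  shows that they are derivatives there too. On the tangent space of the indicatrix the
  Hessian form is proportional to r(v,v) + v_Z^2 (1 - g s / q) with s = Z + g q; by
  Cauchy-Schwarz it is at least v_Z^2 (q^2 - g s q + s^2) / q^2, positive because |g| < 2.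
\<close>

section \<open>Differentiability across the kernel of a linear map\<close>

lemma has_derivative_vec_nth [derivative_intros]:
  "(f has_derivative f') F \<Longrightarrow> ((\<lambda>x. f x $ i) has_derivative (\<lambda>x. f' x $ i)) F"
  by (rule bounded_linear.has_derivative[OF bounded_linear_vec_nth])

lemma linearization_error_bound_on_segment:
  fixes f :: "'a::real_normed_vector \<Rightarrow> 'b::real_normed_vector"
  assumes cont: "continuous_on {0..1} (\<lambda>t. f (x + t *\<^sub>R h))"
    and deriv: "\<And>t. 0 < t \<Longrightarrow> t < 1 \<Longrightarrow> (f has_derivative D t) (at (x + t *\<^sub>R h))"
    and close: "\<And>t. 0 < t \<Longrightarrow> t < 1 \<Longrightarrow> norm (D t h - L h) \<le> e * norm h"
  shows "norm (f (x + h) - f x - L h) \<le> e * norm h"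
proof -
  define \<phi> where "\<phi> t = f (x + t *\<^sub>R h) - t *\<^sub>R L h" for t
  have "(\<phi> has_vector_derivative (D t h - L h)) (at t)" if "0 < t" "t < 1" for t
  proof -
    have lin: "linear (D t)"
      using deriv[OF that] has_derivative_bounded_linear bounded_linear.linear by blast
    have "((\<lambda>t. x + t *\<^sub>R h) has_derivative (\<lambda>s. s *\<^sub>R h)) (at t)"
      by (auto intro!: derivative_eq_intros)
    from has_derivative_compose[OF this deriv[OF that]]
    have "((\<lambda>t. f (x + t *\<^sub>R h)) has_derivative (\<lambda>s. s *\<^sub>R D t h)) (at t)"
      by (simp add: linear_scale[OF lin])
    then have "(\<phi> has_derivative (\<lambda>s. s *\<^sub>R D t h - s *\<^sub>R L h)) (at t)"
      unfolding \<phi>_def by (auto intro!: derivative_eq_intros)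
    then show ?thesis
      by (simp add: has_vector_derivative_def scaleR_diff_right)
  qed
  moreover have "continuous_on {0..1} \<phi>"
    unfolding \<phi>_def by (intro continuous_intros cont)
  ultimately have "norm (\<phi> 1 - \<phi> 0) \<le> e * norm h * 1 - e * norm h * 0"
    using close
    by (intro differentiable_bound_general[where \<phi>'="\<lambda>_. e * norm h"])
       (auto intro!: continuous_intros derivative_eq_intros)
  then show ?thesis
    by (simp add: \<phi>_def algebra_simps)
qed

lemma nonpos_if_eventually_nonpos_along_ray:
  fixes f :: "'a::real_normed_vector \<Rightarrow> real"
  assumes "isCont f y" and "eventually (\<lambda>s. f (y + s *\<^sub>R w) \<le> 0) (at_right 0)"
  shows "f y \<le> 0"
proof -
  have "isCont (\<lambda>s::real. f (y + s *\<^sub>R w)) 0"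
    using assms(1)
    by (intro continuous_at_compose[of 0 "\<lambda>s. y + s *\<^sub>R w" f, unfolded o_def] continuous_intros) simp
  then have "((\<lambda>s. f (y + s *\<^sub>R w)) \<longlongrightarrow> f y) (at_right 0)"
    unfolding isCont_def by (auto intro: tendsto_mono[OF at_le])
  then show ?thesis using assms(2) by (rule tendsto_upperbound) simp
qed

lemma eventually_leaves_kernel:
  assumes "linear T" and "T u = 0" and "T w \<noteq> 0" and "norm u < d"
  shows "eventually (\<lambda>s. norm (u + s *\<^sub>R w) < d \<and> T (u + s *\<^sub>R w) \<noteq> 0) (at_right (0::real))"
proof -
  have "((\<lambda>s. norm (u + s *\<^sub>R w)) \<longlongrightarrow> norm u) (at_right 0)"
    by (auto intro!: tendsto_eq_intros)
  then have "eventually (\<lambda>s. norm (u + s *\<^sub>R w) < d) (at_right 0)"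
    using assms(4) by (rule order_tendstoD)
  moreover have "eventually (\<lambda>s. s > 0) (at_right (0::real))"
    by (rule eventually_at_right_less)
  ultimately show ?thesis
    by eventually_elim (use assms(2,3) in \<open>simp add: linear_add[OF assms(1)] linear_scale[OF assms(1)]\<close>)
qed

lemma has_derivative_across_kernel:
  fixes f :: "'a::real_normed_vector \<Rightarrow> 'b::real_normed_vector"
    and T :: "'a \<Rightarrow> 'c::real_normed_vector"
  assumes lin: "linear T" and "T x0 = 0" and "T w \<noteq> 0"
    and U: "open U" "x0 \<in> U" and cont: "continuous_on U f"
    and deriv: "\<And>x. x \<in> U \<Longrightarrow> T x \<noteq> 0 \<Longrightarrow> (f has_derivative D x) (at x)"
    and "bounded_linear (D x0)"
    and close: "\<And>e. e > 0 \<Longrightarrow> \<exists>d>0. \<forall>x\<in>U. T x \<noteq> 0 \<longrightarrow> norm (x - x0) < d \<longrightarrow>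
                   (\<forall>v. norm (D x v - D x0 v) \<le> e * norm v)"
  shows "(f has_derivative D x0) (at x0)"
  unfolding has_derivative_at_alt
proof (intro conjI \<open>bounded_linear (D x0)\<close> allI impI)
  fix e :: real assume "e > 0"
  obtain d1 where "d1 > 0" and d1: "\<forall>x\<in>U. T x \<noteq> 0 \<longrightarrow> norm (x - x0) < d1 \<longrightarrow>
      (\<forall>v. norm (D x v - D x0 v) \<le> e * norm v)"
    using close[OF \<open>e > 0\<close>] by blast
  obtain d2 where "d2 > 0" and d2: "ball x0 d2 \<subseteq> U"
    using U open_contains_ball by blast
  define d where "d = min d1 d2"
  define err where "err y = norm (f y - f x0 - D x0 (y - x0)) - e * norm (y - x0)" for y
  have off_kernel: "err y \<le> 0" if "norm (y - x0) < d" "T (y - x0) \<noteq> 0" for y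
  proof -
    define h where "h = y - x0"
    have "norm h < d" "T h \<noteq> 0" using that by (simp_all add: h_def)
    have short: "norm (t *\<^sub>R h) < d" if "0 \<le> t" "t \<le> 1" for t
      using that \<open>norm h < d\<close> mult_left_le_one_le[of "norm h" t] by simp
    have in_U: "x0 + t *\<^sub>R h \<in> U" if "0 \<le> t" "t \<le> 1" for t
      using d2 short[OF that] by (auto simp: d_def dist_norm)
    have T_ne: "T (x0 + t *\<^sub>R h) \<noteq> 0" if "0 < t" for t
      using that \<open>T h \<noteq> 0\<close> \<open>T x0 = 0\<close> by (simp add: linear_add[OF lin] linear_scale[OF lin])
    have "norm (f (x0 + h) - f x0 - D x0 h) \<le> e * norm h"
    proof (rule linearization_error_bound_on_segment)
      show "continuous_on {0..1} (\<lambda>t. f (x0 + t *\<^sub>R h))"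
        using in_U by (intro continuous_on_compose2[OF cont] continuous_intros) auto
      show "(f has_derivative D (x0 + t *\<^sub>R h)) (at (x0 + t *\<^sub>R h))" if "0 < t" "t < 1" for t
        using that by (intro deriv in_U T_ne) auto
      show "norm (D (x0 + t *\<^sub>R h) h - D x0 h) \<le> e * norm h" if "0 < t" "t < 1" for t
        using that d1 in_U[of t] T_ne[of t] short[of t] by (simp add: d_def)
    qed
    then show ?thesis by (simp add: err_def h_def)
  qed
  have "err y \<le> 0" if "norm (y - x0) < d" for y
  proof (cases "T (y - x0) = 0")
    case False
    then show ?thesis using off_kernel that by simp
  next
    case True
    have "y \<in> U" using that d2 by (auto simp: d_def dist_norm norm_minus_commute)
    then have "isCont err y"
      using cont U continuous_on_eq_continuous_at
        bounded_linear.continuous[OF \<open>bounded_linear (D x0)\<close>, of "at y" "\<lambda>y. y - x0"]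
      unfolding err_def by (intro continuous_intros) (auto intro: continuous_intros)
    moreover have "eventually (\<lambda>s. err (y + s *\<^sub>R w) \<le> 0) (at_right 0)"
      using eventually_leaves_kernel[OF lin True \<open>T w \<noteq> 0\<close> that]
      by eventually_elim (intro off_kernel, simp_all add: algebra_simps)
    ultimately show ?thesis by (rule nonpos_if_eventually_nonpos_along_ray)
  qed
  moreover have "d > 0" using \<open>d1 > 0\<close> \<open>d2 > 0\<close> by (simp add: d_def)
  ultimately show "\<exists>d>0. \<forall>y. norm (y - x0) < d \<longrightarrow> norm (f y - f x0 - D x0 (y - x0)) \<le> e * norm (y - x0)"
    by (auto simp: err_def)
qed

lemma norm_matrix_vector_mult_le:
  fixes M :: "real^'n^'m"
  shows "norm (M *v v) \<le> real CARD('m) * real CARD('n) * norm M * norm v"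
proof -
  have "\<bar>M $ i $ j\<bar> \<le> norm M" for i j
    using component_le_norm_cart[of "M $ i" j] Finite_Cartesian_Product.norm_nth_le[of M i] by linarith
  then have "onorm ((*v) M) \<le> real CARD('m) * real CARD('n) * norm M"
    by (rule onorm_le_matrix_component)
  moreover have "norm (M *v v) \<le> onorm ((*v) M) * norm v"
    by (rule onorm[OF matrix_vector_mul_bounded_linear])
  ultimately show ?thesis
    by (meson mult_right_mono norm_ge_zero order_trans)
qed

lemma cos_add_mult_sin_le_exp:
  fixes k d :: real
  assumes "\<bar>d\<bar> \<le> pi"
  shows "cos d + k * sin d \<le> exp (k * d)"
proof -
  \<comment> \<open>f' has the sign of - sin t, so on [-pi, pi] f is maximal at 0\<close>
  define f where "f t = exp (- k * t) * (cos t + k * sin t)" for t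
  have f': "DERIV f t :> - exp (- k * t) * (1 + k\<^sup>2) * sin t" for t
    unfolding f_def by (auto intro!: derivative_eq_intros simp: power2_eq_square algebra_simps)
  have "f d \<le> f 0"
  proof (cases "d \<ge> 0")
    case True
    show ?thesis
    proof (rule DERIV_nonpos_imp_nonincreasing[where f=f, OF True])
      fix t assume "0 \<le> t" "t \<le> d"
      then have "sin t \<ge> 0" using assms by (intro sin_ge_zero) auto
      then show "\<exists>y. DERIV f t :> y \<and> y \<le> 0"
        using f' by (intro exI conjI) (auto intro!: mult_nonneg_nonneg)
    qed
  next
    case False
    show ?thesis
    proof (rule DERIV_nonneg_imp_nondecreasing[where f=f and a=d and b=0])
      show "d \<le> 0" using False by simp
      fix t assume "d \<le> t" "t \<le> 0"
      then have "sin (- t) \<ge> 0" using assms by (intro sin_ge_zero) auto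
      then show "\<exists>y. DERIV f t :> y \<and> y \<ge> 0"
        using f' by (intro exI conjI) (auto intro!: mult_nonneg_nonpos)
    qed
  qed
  then have "exp (- k * d) * (cos d + k * sin d) \<le> 1" by (simp add: f_def)
  then have "exp (k * d) * (exp (- k * d) * (cos d + k * sin d)) \<le> exp (k * d)"
    by (simp add: mult_left_le)
  then show ?thesis by (simp add: mult.assoc[symmetric] flip: exp_add)
qed

lemma hessian_rearrangement:
  fixes B Z q g K rho vz p p' e :: real
  assumes "B = Z\<^sup>2 + g * q * Z + q\<^sup>2" and "B \<noteq> 0" and "q \<noteq> 0"
  shows "K / B * (p' + (vz + g * (rho / q)) * e)
      + (K / B * (rho + (Z + g * q) * vz) * B
         - K * (2 * Z * vz + g * (rho / q * Z + q * vz) + 2 * rho)) / (B * B) * (p + (Z + g * q) * e)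
    = K / B * (p' + (vz + g * q * rho / B) * e - (rho + Z * vz) / B * (p + (Z + g * q) * e)
        - g * Z / B * (rho / q) * p)"
  using assms(2,3) by (simp add: field_simps) (simp add: assms(1) algebra_simps power2_eq_square)

section \<open>The Finsleroid metric function\<close>

locale finsleroid =
  fixes z :: "'n::finite" and r :: "'n \<Rightarrow> 'n \<Rightarrow> real" and g :: real
  assumes r_sym_posdef: "sym_posdef_off z r"
    and g_gt: "-2 < g" and g_lt: "g < 2"
    and card_ge_2: "CARD('n) \<ge> 2"
begin

definition rform :: "real^'n \<Rightarrow> real^'n \<Rightarrow> real" where
  "rform x y = (\<Sum>a\<in>-{z}. \<Sum>b\<in>-{z}. r a b * x$a * y$b)"

definition rvec :: "real^'n \<Rightarrow> real^'n" where
  "rvec x = (\<chi> i. if i = z then 0 else \<Sum>b\<in>-{z}. r i b * x$b)"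

lemma rform_sym: "rform x y = rform y x"
proof -
  have r_sym: "a \<noteq> z \<Longrightarrow> b \<noteq> z \<Longrightarrow> r a b = r b a" for a b
    using r_sym_posdef unfolding sym_posdef_off_def by blast
  have "rform x y = (\<Sum>b\<in>-{z}. \<Sum>a\<in>-{z}. r a b * x$a * y$b)"
    unfolding rform_def by (rule sum.swap)
  also have "\<dots> = rform y x"
    unfolding rform_def by (intro sum.cong refl) (simp add: r_sym mult_ac)
  finally show ?thesis .
qed

lemma rform_linear_left: "rform (a *\<^sub>R x + b *\<^sub>R y) w = a * rform x w + b * rform y w"
  unfolding rform_def by (simp add: algebra_simps sum.distrib sum_distrib_left)

lemma rform_diff_left: "rform (x - y) w = rform x w - rform y w"
  using rform_linear_left[of 1 x "-1" y w] by simp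

lemma rform_scale_left: "rform (a *\<^sub>R x) w = a * rform x w"
  using rform_linear_left[of a x 0 x w] by simp

lemma rform_diff_right: "rform w (x - y) = rform w x - rform w y"
  using rform_diff_left rform_sym by metis

lemma rform_scale_right: "rform w (a *\<^sub>R x) = a * rform w x"
  using rform_scale_left rform_sym by metis

lemma rform_eq_0_if: "(\<forall>a. a \<noteq> z \<longrightarrow> x$a = 0) \<Longrightarrow> rform x y = 0"
  unfolding rform_def by (intro sum.neutral) auto

lemma rform_self_pos: "(\<exists>a. a \<noteq> z \<and> x$a \<noteq> 0) \<Longrightarrow> rform x x > 0"
  using r_sym_posdef unfolding sym_posdef_off_def rform_def by (metis (no_types, lifting) sum.cong)

lemma rform_self_nonneg: "rform x x \<ge> 0"
  using rform_self_pos[of x] rform_eq_0_if[of x x] by force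

lemma rform_self_eq_0_iff: "rform x x = 0 \<longleftrightarrow> (\<forall>a. a \<noteq> z \<longrightarrow> x$a = 0)"
  using rform_self_pos[of x] rform_eq_0_if[of x x] by force

lemma rform_Cauchy_Schwarz: "(rform x y)\<^sup>2 \<le> rform x x * rform y y"
proof (cases "rform y y = 0")
  case True
  then have "rform x y = 0" using rform_self_eq_0_iff rform_eq_0_if rform_sym by metis
  then show ?thesis using True by simp
next
  case False
  then have "rform y y > 0" using rform_self_nonneg[of y] by simp
  define t where "t = rform x y / rform y y"
  have "0 \<le> rform (x - t *\<^sub>R y) (x - t *\<^sub>R y)" by (rule rform_self_nonneg)
  also have "\<dots> = rform x x - 2 * t * rform x y + t\<^sup>2 * rform y y"
    by (simp add: rform_diff_left rform_diff_right rform_scale_left rform_scale_right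
        rform_sym[of y x] power2_eq_square algebra_simps)
  also have "\<dots> = rform x x - (rform x y)\<^sup>2 / rform y y"
    using \<open>rform y y > 0\<close> by (simp add: t_def field_simps power2_eq_square)
  finally show ?thesis using \<open>rform y y > 0\<close> by (simp add: field_simps)
qed

lemma inner_rvec_left: "rvec x \<bullet> y = rform x y"
proof -
  have "rvec x \<bullet> y = (\<Sum>i\<in>-{z}. rvec x $ i * y $ i)"
    unfolding inner_vec_def inner_real_def by (rule sum.mono_neutral_right) (auto simp: rvec_def)
  also have "\<dots> = rform y x"
    unfolding rform_def by (intro sum.cong refl) (auto simp: rvec_def sum_distrib_left sum_distrib_right mult_ac)
  finally show ?thesis by (simp add: rform_sym)
qed

lemma inner_rvec_right: "y \<bullet> rvec x = rform x y"
  using inner_rvec_left by (simp add: inner_commute)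

lemma linear_rvec: "linear rvec"
  by (rule linearI) (auto simp: rvec_def vec_eq_iff algebra_simps sum.distrib sum_distrib_left)

abbreviation "q \<equiv> fq z r"
abbreviation "A \<equiv> fA z r g"
abbreviation "B \<equiv> fB z r g"
abbreviation "Phi \<equiv> fPhi z r g"
abbreviation "K \<equiv> finsleroid_K z r g"
abbreviation "h \<equiv> fh g"
abbreviation "G \<equiv> fG g"

lemma q_eq: "q x = sqrt (rform x x)"
  unfolding fq_def rform_def ..

lemma q_0 [simp]: "q 0 = 0"
  by (simp add: fq_def)

lemma q_nonneg: "q x \<ge> 0"
  by (simp add: q_eq rform_self_nonneg)

lemma q_sq: "(q x)\<^sup>2 = rform x x"
  by (simp add: q_eq rform_self_nonneg)

lemma q_eq_0_iff: "q x = 0 \<longleftrightarrow> (\<forall>a. a \<noteq> z \<longrightarrow> x$a = 0)"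
  by (simp add: q_eq rform_self_eq_0_iff)

lemma q_scale: "q (t *\<^sub>R x) = \<bar>t\<bar> * q x"
proof -
  have "rform (t *\<^sub>R x) (t *\<^sub>R x) = t\<^sup>2 * rform x x"
    by (simp add: rform_scale_left rform_scale_right power2_eq_square)
  then show ?thesis by (simp add: q_eq real_sqrt_mult)
qed

lemma rform_le_q_mult_q: "\<bar>rform x y\<bar> \<le> q x * q y"
  using rform_Cauchy_Schwarz[of x y]
  by (metis q_eq real_sqrt_abs real_sqrt_le_mono real_sqrt_mult)

lemma q_pos_or_z_ne_0: "x \<noteq> 0 \<Longrightarrow> q x > 0 \<or> x$z \<noteq> 0"
  using q_eq_0_iff[of x] q_nonneg[of x] by (metis less_eq_real_def vec_eq_iff zero_index)

lemma g_sq_less_4: "g\<^sup>2 < 4"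
proof -
  have "(2 - g) * (2 + g) > 0" using g_gt g_lt by simp
  then show ?thesis by (simp add: algebra_simps power2_eq_square)
qed

lemma h_sq: "h\<^sup>2 = 1 - g\<^sup>2 / 4"
  using g_sq_less_4 unfolding fh_def by simp

lemma h_pos: "h > 0"
  using g_sq_less_4 unfolding fh_def by simp

lemma G_mult_h: "G * h = g"
  using h_pos unfolding fG_def by simp

lemma B_eq: "B x = (A x)\<^sup>2 + h\<^sup>2 * (q x)\<^sup>2"
  unfolding fB_def fA_def h_sq by (simp add: power2_eq_square field_simps)

lemma B_pos: "x \<noteq> 0 \<Longrightarrow> B x > 0"
  using q_pos_or_z_ne_0[of x] h_pos q_nonneg[of x] unfolding B_eq
  by (cases "q x = 0") (auto simp: fA_def add_nonneg_pos add_pos_nonneg)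

lemma B_nonneg: "B x \<ge> 0"
  unfolding B_eq by simp

lemma polar_coordinates:
  assumes "x \<noteq> 0"
  shows "h * q x = sqrt (B x) * cos (Phi x)" and "A x = sqrt (B x) * sin (Phi x)"
proof -
  have "B x > 0" using B_pos[OF assms] .
  have "h * q x = sqrt (B x) * cos (Phi x) \<and> A x = sqrt (B x) * sin (Phi x)"
  proof (cases "q x > 0")
    case True
    then have "h * q x > 0" using h_pos by simp
    have "1 + (A x / (h * q x))\<^sup>2 = B x / (h * q x)\<^sup>2"
      using True h_pos by (simp add: B_eq field_simps power2_eq_square)
    then have "sqrt (1 + (A x / (h * q x))\<^sup>2) = sqrt (B x) / (h * q x)"
      using \<open>h * q x > 0\<close> by (simp add: real_sqrt_divide)
    then show ?thesis
      using True h_pos \<open>B x > 0\<close> unfolding fPhi_def by (simp add: cos_arctan sin_arctan)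
  next
    case False
    then have "q x = 0" using q_nonneg[of x] by simp
    moreover have "x$z \<noteq> 0" using q_pos_or_z_ne_0[OF assms] False by simp
    ultimately show ?thesis unfolding fPhi_def by (auto simp: fA_def fB_def)
  qed
  then show "h * q x = sqrt (B x) * cos (Phi x)" and "A x = sqrt (B x) * sin (Phi x)"
    by auto
qed

lemma abs_Phi_le: "\<bar>Phi x\<bar> \<le> pi / 2"
  unfolding fPhi_def using arctan_bounded[of "A x / (h * q x)"] by (auto simp: abs_le_iff)

lemma Phi_eq_if_A_ne_0:
  assumes "A x \<noteq> 0"
  shows "Phi x = sgn (A x) * pi / 2 - arctan (h * q x / A x)"
proof (cases "q x = 0")
  case True
  then show ?thesis using assms by (auto simp: fPhi_def fA_def sgn_if)
next
  case False
  then have "q x > 0" using q_nonneg[of x] by simp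
  have "arctan (A x / (h * q x)) = arctan (1 / (h * q x / A x))"
    by simp
  also have "\<dots> = sgn (h * q x / A x) * pi / 2 - arctan (h * q x / A x)"
    using \<open>q x > 0\<close> h_pos assms by (intro Transcendental.arctan_inverse) simp
  also have "sgn (h * q x / A x) = sgn (A x)"
    using \<open>q x > 0\<close> h_pos by (simp add: sgn_divide sgn_mult)
  finally show ?thesis
    using \<open>q x > 0\<close> by (simp add: fPhi_def)
qed

lemma K_eq: "K x = sqrt (B x) * exp (G * Phi x / 2)"
  unfolding finsleroid_K_def fJ_def by (auto simp: fB_def fq_def)

lemma K_pos: "x \<noteq> 0 \<Longrightarrow> K x > 0"
  using B_pos by (simp add: K_eq)

lemma K_nonneg: "K x \<ge> 0"
  using B_nonneg by (simp add: K_eq)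

lemma K_0 [simp]: "K 0 = 0"
  by (simp add: finsleroid_K_def)

lemma K_scale:
  assumes "t > 0"
  shows "K (t *\<^sub>R x) = t * K x"
proof -
  have q: "q (t *\<^sub>R x) = t * q x" using assms by (simp add: q_scale)
  have A: "A (t *\<^sub>R x) = t * A x" by (simp add: fA_def q algebra_simps)
  moreover have "B (t *\<^sub>R x) = t\<^sup>2 * B x" by (simp add: fB_def q power2_eq_square algebra_simps)
  moreover have "Phi (t *\<^sub>R x) = Phi x"
    using assms h_pos by (simp add: fPhi_def q A zero_less_mult_iff)
  ultimately show ?thesis using assms by (simp add: K_eq real_sqrt_mult)
qed

section \<open>Euler's identity and convexity\<close>

definition eZ :: "real^'n" where
  "eZ = axis z 1"

definition W :: "real^'n \<Rightarrow> real^'n" where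
  "W x = rvec x + (x$z + g * q x) *\<^sub>R eZ"

definition grad :: "real^'n \<Rightarrow> real^'n" where
  "grad x = (K x / B x) *\<^sub>R W x"

lemma inner_eZ_right [simp]: "y \<bullet> eZ = y$z"
  by (simp add: eZ_def inner_axis)

lemma inner_eZ_left [simp]: "eZ \<bullet> y = y$z"
  by (simp add: eZ_def inner_axis')

lemma inner_W_left: "W x \<bullet> y = rform x y + (x$z + g * q x) * y$z"
  by (simp add: W_def inner_add_left inner_rvec_left)

lemma inner_W_right: "y \<bullet> W x = rform x y + (x$z + g * q x) * y$z"
  using inner_W_left by (simp add: inner_commute)

lemma inner_grad_right: "y \<bullet> grad x = K x / B x * (rform x y + (x$z + g * q x) * y$z)"
  by (simp add: grad_def inner_W_right)

lemma inner_W_self: "x \<bullet> W x = B x"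
  by (simp add: inner_W_right fB_def flip: q_sq) (simp add: power2_eq_square algebra_simps)

lemma inner_grad_self_eq_K: "x \<noteq> 0 \<Longrightarrow> x \<bullet> grad x = K x"
  using B_pos[of x] by (simp add: grad_def inner_W_self)

lemma inner_grad_le_K:
  assumes "p \<noteq> 0"
  shows "x \<bullet> grad p \<le> K x"
proof (cases "x = 0")
  case True
  then show ?thesis by simp
next
  case False
  have "B p > 0" using B_pos[OF assms] .
  define d where "d = Phi x - Phi p"
  have "(G / 2) * ((h * q p) * A x - A p * (h * q x)) = (G * h / 2) * (q p * A x - A p * q x)"
    by (simp add: algebra_simps)
  moreover have "(h * q p) * (h * q x) = h\<^sup>2 * (q p * q x)"
    by (simp add: power2_eq_square)
  ultimately have "q p * q x + (p$z + g * q p) * x$z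
      = (h * q p) * (h * q x) + A p * A x + (G / 2) * ((h * q p) * A x - A p * (h * q x))"
    unfolding G_mult_h h_sq by (simp add: fA_def power2_eq_square algebra_simps)
  also have "\<dots> = sqrt (B p) * sqrt (B x) * (cos d + (G / 2) * sin d)"
    unfolding polar_coordinates[OF assms] polar_coordinates[OF False] d_def cos_diff sin_diff
    by (simp add: algebra_simps)
  finally have pairing: "q p * q x + (p$z + g * q p) * x$z
      = sqrt (B p) * sqrt (B x) * (cos d + (G / 2) * sin d)" .
  have K_p_over_B_p: "K p / B p * sqrt (B p) = exp (G * Phi p / 2)"
  proof -
    have "K p / B p * sqrt (B p) = exp (G * Phi p / 2) * ((sqrt (B p))\<^sup>2 / B p)"
      by (simp add: K_eq power2_eq_square)
    then show ?thesis using \<open>B p > 0\<close> by simp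
  qed
  have "x \<bullet> grad p \<le> K p / B p * (q p * q x + (p$z + g * q p) * x$z)"
    unfolding inner_grad_right using K_pos[OF assms] \<open>B p > 0\<close> rform_le_q_mult_q[of p x]
    by (intro mult_left_mono) auto
  also have "\<dots> = exp (G * Phi p / 2) * sqrt (B x) * (cos d + (G / 2) * sin d)"
    unfolding pairing K_p_over_B_p[symmetric] by (simp only: mult.assoc)
  also have "\<dots> \<le> exp (G * Phi p / 2) * sqrt (B x) * exp ((G / 2) * d)"
    using abs_Phi_le[of x] abs_Phi_le[of p] B_nonneg[of x]
    by (intro mult_left_mono cos_add_mult_sin_le_exp) (auto simp: d_def)
  also have "\<dots> = K x"
    by (simp add: K_eq d_def algebra_simps flip: exp_add)
  finally show ?thesis .
qed

lemma convex_on_K: "convex_on UNIV K"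
proof (rule convex_onI)
  fix t :: real and x y :: "real^'n"
  assume "t > 0" "t < 1"
  define p where "p = (1 - t) *\<^sub>R x + t *\<^sub>R y"
  show "K p \<le> (1 - t) * K x + t * K y"
  proof (cases "p = 0")
    case True
    then show ?thesis using \<open>t < 1\<close> \<open>t > 0\<close> K_nonneg[of x] K_nonneg[of y] by simp
  next
    case False
    have "K p = (1 - t) * (x \<bullet> grad p) + t * (y \<bullet> grad p)"
      using inner_grad_self_eq_K[OF False] by (simp add: p_def inner_add_left)
    also have "\<dots> \<le> (1 - t) * K x + t * K y"
      using \<open>t < 1\<close> \<open>t > 0\<close> inner_grad_le_K[OF False]
      by (intro add_mono mult_left_mono) auto
    finally show ?thesis .
  qed
qed auto

lemma convex_sublevel: "convex {x. K x \<le> c}"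
proof (rule convexI)
  fix x y and u v :: real
  assume "x \<in> {x. K x \<le> c}" "y \<in> {x. K x \<le> c}" "0 \<le> u" "0 \<le> v" "u + v = 1"
  then have "K (u *\<^sub>R x + v *\<^sub>R y) \<le> u * K x + v * K y"
    using convex_onD[OF convex_on_K, of v x y] by (simp add: eq_diff_eq[symmetric])
  also have "\<dots> \<le> (u + v) * c"
    unfolding distrib_right using \<open>x \<in> _\<close> \<open>y \<in> _\<close> \<open>0 \<le> u\<close> \<open>0 \<le> v\<close>
    by (intro add_mono mult_left_mono) auto
  finally show "u *\<^sub>R x + v *\<^sub>R y \<in> {x. K x \<le> c}"
    using \<open>u + v = 1\<close> by (simp add: algebra_simps)
qed

lemma isCont_q: "isCont q x"
  unfolding q_eq rform_def by (intro continuous_intros)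

lemma isCont_A: "isCont A x"
  unfolding fA_def by (intro continuous_intros isCont_q) simp

lemma isCont_B: "isCont B x"
  unfolding fB_def by (intro continuous_intros isCont_q)

lemma isCont_rvec: "isCont rvec x"
  using linear_rvec by (simp add: linear_continuous_at linear_conv_bounded_linear)

lemma isCont_W: "isCont W x"
  unfolding W_def[abs_def] by (intro continuous_intros isCont_rvec isCont_q)

lemma open_q_pos: "open {x. q x > 0}"
  using isCont_q by (intro open_Collect_less continuous_intros continuous_at_imp_continuous_on) auto

lemma isCont_Phi:
  assumes "x \<noteq> 0"
  shows "isCont Phi x"
proof (cases "q x > 0")
  case True
  have "eventually (\<lambda>y. q y > 0) (nhds x)"
    using eventually_nhds_in_open[OF open_q_pos] True by simp
  then have "eventually (\<lambda>y. arctan (A y / (h * q y)) = Phi y) (nhds x)"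
    by (rule eventually_mono) (simp add: fPhi_def)
  moreover have "isCont (\<lambda>y. arctan (A y / (h * q y))) x"
    using True h_pos by (intro continuous_intros isCont_q isCont_A) auto
  ultimately show ?thesis by (rule isCont_cong[THEN iffD1])
next
  case False
  \<comment> \<open>on the Z-axis, A = Z is nonzero and Phi is continued by the arctan of the reciprocal\<close>
  then have "A x \<noteq> 0" using q_pos_or_z_ne_0[OF assms] q_nonneg[of x] by (simp add: fA_def)
  have "open {y. A y \<noteq> 0}"
    using isCont_A by (intro open_Collect_neq continuous_intros continuous_at_imp_continuous_on) auto
  then have "eventually (\<lambda>y. A y \<noteq> 0) (nhds x)"
    using eventually_nhds_in_open \<open>A x \<noteq> 0\<close> by fastforce
  then have "eventually (\<lambda>y. sgn (A y) * pi / 2 - arctan (h * q y / A y) = Phi y) (nhds x)"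
    by (rule eventually_mono) (simp add: Phi_eq_if_A_ne_0)
  moreover have "isCont (\<lambda>y. sgn (A y) * pi / 2 - arctan (h * q y / A y)) x"
    using \<open>A x \<noteq> 0\<close> by (intro continuous_intros isCont_q isCont_A) auto
  ultimately show ?thesis by (rule isCont_cong[THEN iffD1])
qed

lemma isCont_K: "isCont K x"
proof (cases "x = 0")
  case False
  have "isCont (\<lambda>y. sqrt (B y) * exp (G * Phi y / 2)) x"
    by (intro continuous_intros isCont_B isCont_o2[OF isCont_Phi[OF False]]) simp
  then show ?thesis by (simp add: K_eq[abs_def])
next
  case True
  \<comment> \<open>the angular factor of K is bounded, while B is continuous and vanishes at 0\<close>
  define M where "M = exp (\<bar>G\<bar> * pi / 4)"
  have "((\<lambda>y. sqrt (B y) * M) \<longlongrightarrow> sqrt (B 0) * M) (at 0)"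
    using isCont_B[of 0] unfolding isCont_def by (intro tendsto_intros)
  moreover have "B 0 = 0" by (simp add: fB_def fq_def)
  ultimately have lim: "((\<lambda>y. sqrt (B y) * M) \<longlongrightarrow> 0) (at 0)" by simp
  have bound: "norm (K y) \<le> sqrt (B y) * M" for y
  proof -
    have "G * Phi y \<le> \<bar>G\<bar> * \<bar>Phi y\<bar>"
      by (metis abs_ge_self abs_mult)
    also have "\<dots> \<le> \<bar>G\<bar> * (pi / 2)"
      using abs_Phi_le[of y] by (intro mult_left_mono) auto
    finally have "exp (G * Phi y / 2) \<le> M"
      by (simp add: M_def)
    then show ?thesis
      using K_nonneg[of y] B_nonneg[of y] by (simp add: K_eq mult_left_mono)
  qed
  have "(K \<longlongrightarrow> 0) (at 0)"
    by (rule Lim_null_comparison[OF always_eventually[OF allI[OF bound]] lim])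
  then show ?thesis using True by (simp add: isCont_def)
qed

lemma continuous_on_K: "continuous_on S K"
  by (intro continuous_at_imp_continuous_on ballI isCont_K)

lemma isCont_grad: "x \<noteq> 0 \<Longrightarrow> isCont grad x"
  unfolding grad_def[abs_def] using B_pos[of x]
  by (intro continuous_intros isCont_B isCont_K isCont_W) auto

section \<open>Gradient and Hessian\<close>

lemma has_derivative_rform_self: "((\<lambda>y. rform y y) has_derivative (\<lambda>v. 2 * rform x v)) (at x)"
proof -
  have "((\<lambda>y. rvec y \<bullet> y) has_derivative (\<lambda>v. rvec x \<bullet> v + rvec v \<bullet> x)) (at x)"
    by (intro has_derivative_inner linear_imp_has_derivative[OF linear_rvec] has_derivative_ident)
  then show ?thesis by (simp add: inner_rvec_left rform_sym)
qed

lemma has_derivative_q: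
  assumes "q x > 0"
  shows "(q has_derivative (\<lambda>v. rform x v / q x)) (at x)"
proof -
  have "rform x x > 0" using assms q_sq[of x] by (metis zero_less_power2 less_irrefl)
  from has_derivative_real_sqrt[OF this has_derivative_rform_self]
  show ?thesis by (simp add: q_eq[abs_def] field_simps)
qed

lemma has_derivative_A:
  assumes "q x > 0"
  shows "(A has_derivative (\<lambda>v. v$z + g * (rform x v / q x) / 2)) (at x)"
  unfolding fA_def[abs_def] by (auto intro!: derivative_eq_intros has_derivative_q[OF assms])

lemma has_derivative_B:
  assumes "q x > 0"
  shows "(B has_derivative (\<lambda>v. 2 * x$z * v$z + g * (rform x v / q x * x$z + q x * v$z)
            + 2 * rform x v)) (at x)"
  unfolding fB_def[abs_def] using assms
  by (auto intro!: derivative_eq_intros has_derivative_q[OF assms] simp: power2_eq_square algebra_simps)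

lemma has_derivative_Phi:
  assumes "q x > 0"
  shows "(Phi has_derivative (\<lambda>v. h * (q x * v$z - x$z * (rform x v / q x)) / B x)) (at x)"
proof -
  have "h * q x > 0" using assms h_pos by simp
  have inv: "inverse (1 + (A x / (h * q x))\<^sup>2) = (h * q x)\<^sup>2 / B x"
    using h_pos B_pos[of x] assms by (auto simp: B_eq field_simps power2_eq_square)
  have "((\<lambda>y. arctan (A y / (h * q y))) has_derivative
     (\<lambda>v. ((v$z + g * (rform x v / q x) / 2) * (h * q x) - A x * (h * (rform x v / q x)))
          / ((h * q x) * (h * q x)) * inverse (1 + (A x / (h * q x))\<^sup>2))) (at x)"
    using \<open>h * q x > 0\<close>
    by (intro has_derivative_arctan has_derivative_divide' has_derivative_A[OF assms]
        has_derivative_mult_right has_derivative_q[OF assms]) auto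
  also have "(\<lambda>v. ((v$z + g * (rform x v / q x) / 2) * (h * q x) - A x * (h * (rform x v / q x)))
          / ((h * q x) * (h * q x)) * inverse (1 + (A x / (h * q x))\<^sup>2))
      = (\<lambda>v. h * (q x * v$z - x$z * (rform x v / q x)) / B x)"
    using h_pos assms B_pos[of x] unfolding inv
    by (intro ext) (cases "x = 0", auto simp: fA_def field_simps power2_eq_square)
  finally show ?thesis
    by (rule has_derivative_transform_within_open[OF _ open_q_pos]) (use assms in \<open>auto simp: fPhi_def\<close>)
qed

lemma has_derivative_K_off_axis:
  assumes "q x > 0"
  shows "(K has_derivative (\<lambda>v. v \<bullet> grad x)) (at x)"
proof -
  have "x \<noteq> 0" using assms by auto
  define s where "s = sqrt (B x)"
  define E where "E = exp (G * Phi x / 2)"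
  have "s > 0" using B_pos[OF \<open>x \<noteq> 0\<close>] by (simp add: s_def)
  have B_s: "B x = s\<^sup>2" using B_nonneg[of x] by (simp add: s_def)
  have "((\<lambda>y. sqrt (B y)) has_derivative
      (\<lambda>v. (2 * x$z * v$z + g * (rform x v / q x * x$z + q x * v$z) + 2 * rform x v)
           * (inverse s / 2))) (at x)"
    unfolding s_def using B_pos[OF \<open>x \<noteq> 0\<close>] by (intro has_derivative_real_sqrt has_derivative_B[OF assms])
  moreover have "((\<lambda>y. exp (G * Phi y / 2)) has_derivative
      (\<lambda>v. G * (h * (q x * v$z - x$z * (rform x v / q x)) / B x) / 2 * E)) (at x)"
    unfolding E_def by (auto intro!: derivative_eq_intros has_derivative_Phi[OF assms])
  ultimately have raw: "((\<lambda>y. sqrt (B y) * exp (G * Phi y / 2)) has_derivative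
      (\<lambda>v. s * (G * (h * (q x * v$z - x$z * (rform x v / q x)) / B x) / 2 * E)
         + (2 * x$z * v$z + g * (rform x v / q x * x$z + q x * v$z) + 2 * rform x v)
           * (inverse s / 2) * E)) (at x)"
    unfolding s_def E_def by (rule has_derivative_mult)
  have K_over_B: "K x / B x = E / s"
    using \<open>s > 0\<close> by (simp add: K_eq B_s power2_eq_square flip: s_def E_def)
  have "s * (G * (h * (q x * v$z - x$z * (rform x v / q x)) / B x) / 2 * E)
         + (2 * x$z * v$z + g * (rform x v / q x * x$z + q x * v$z) + 2 * rform x v)
           * (inverse s / 2) * E
      = v \<bullet> grad x" for v
  proof -
    have "s * (G * (h * (q x * v$z - x$z * (rform x v / q x)) / B x) / 2 * E)
         + (2 * x$z * v$z + g * (rform x v / q x * x$z + q x * v$z) + 2 * rform x v)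
           * (inverse s / 2) * E
      = E / s * ((G * h) * (q x * v$z - x$z * (rform x v / q x)) / 2
         + (2 * x$z * v$z + g * (rform x v / q x * x$z + q x * v$z) + 2 * rform x v) / 2)"
      using \<open>s > 0\<close> by (simp add: B_s field_simps power2_eq_square)
    also have "\<dots> = v \<bullet> grad x"
      using assms \<open>s > 0\<close> unfolding G_mult_h inner_grad_right K_over_B by (simp add: field_simps)
    finally show ?thesis .
  qed
  moreover have "K = (\<lambda>y. sqrt (B y) * exp (G * Phi y / 2))"
    by (simp add: K_eq fun_eq_iff)
  ultimately show ?thesis
    using has_derivative_eq_rhs[OF raw] by auto
qed

lemma has_derivative_W:
  assumes "q x > 0"
  shows "(W has_derivative (\<lambda>v. rvec v + (v$z + g * (rform x v / q x)) *\<^sub>R eZ)) (at x)"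
  unfolding W_def[abs_def]
  by (auto intro!: derivative_eq_intros linear_imp_has_derivative[OF linear_rvec] has_derivative_q[OF assms])

text \<open>The derivative of grad off the Z-axis, rearranged (see hessian_rearrangement) so that the
  only term of order 1/q is the last one, which is O(q) and so continuous across the axis.\<close>

definition hess_map :: "real^'n \<Rightarrow> real^'n \<Rightarrow> real^'n" where
  "hess_map x v = (K x / B x) *\<^sub>R
     (rvec v + (v$z + g * q x * rform x v / B x) *\<^sub>R eZ
      - ((rform x v + x$z * v$z) / B x) *\<^sub>R W x
      - (g * x$z / B x * (rform x v / q x)) *\<^sub>R rvec x)"

definition hess :: "real^'n \<Rightarrow> real^'n^'n" where
  "hess x = matrix (hess_map x)"

lemma linear_hess_map: "linear (hess_map x)"
  by (rule linearI)
     (simp_all add: hess_map_def linear_add[OF linear_rvec] linear_scale[OF linear_rvec]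
       flip: inner_rvec_left add: inner_add_right algebra_simps add_divide_distrib)

lemma hess_mult_vector: "hess x *v v = hess_map x v"
  using matrix_vector_mul(2)[OF linear_hess_map, of x] unfolding hess_def by metis

lemma has_derivative_grad_off_axis:
  assumes "q x > 0"
  shows "(grad has_derivative (\<lambda>v. hess x *v v)) (at x)"
proof -
  have "x \<noteq> 0" using assms by auto
  have "B x > 0" using B_pos[OF \<open>x \<noteq> 0\<close>] .
  define dB where "dB v = 2 * x$z * v$z + g * (rform x v / q x * x$z + q x * v$z) + 2 * rform x v" for v
  have raw: "((\<lambda>y. (K y / B y) *\<^sub>R W y) has_derivative
      (\<lambda>v. (K x / B x) *\<^sub>R (rvec v + (v$z + g * (rform x v / q x)) *\<^sub>R eZ)
         + (((v \<bullet> grad x) * B x - K x * dB v) / (B x * B x)) *\<^sub>R W x)) (at x)"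
    using \<open>B x > 0\<close> unfolding dB_def
    by (intro has_derivative_scaleR has_derivative_divide' has_derivative_K_off_axis[OF assms]
        has_derivative_B[OF assms] has_derivative_W[OF assms]) auto
  have "((K x / B x) *\<^sub>R (rvec v + (v$z + g * (rform x v / q x)) *\<^sub>R eZ)
         + (((v \<bullet> grad x) * B x - K x * dB v) / (B x * B x)) *\<^sub>R W x) $ i = (hess x *v v) $ i"
    for v i
    unfolding hess_mult_vector hess_map_def W_def inner_grad_right dB_def
    using \<open>B x > 0\<close> assms
    by (simp only: vector_add_component vector_scaleR_component vector_minus_component real_scaleR_def)
       (rule hessian_rearrangement[OF fB_def]; simp)
  then have "(K x / B x) *\<^sub>R (rvec v + (v$z + g * (rform x v / q x)) *\<^sub>R eZ)
         + (((v \<bullet> grad x) * B x - K x * dB v) / (B x * B x)) *\<^sub>R W x = hess x *v v" for v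
    by (simp add: vec_eq_iff)
  then show ?thesis
    using has_derivative_eq_rhs[OF raw] by (auto simp: grad_def[abs_def])
qed

lemma rvec_nth: "rvec y $ i = rform y (axis i 1)"
  using inner_rvec_left[of y "axis i 1"] by (simp add: inner_axis)

lemma isCont_rform: "isCont (\<lambda>y. rform y a) x"
  unfolding rform_def by (intro continuous_intros)

lemma isCont_rform_mult_rform_div_q: "isCont (\<lambda>y. rform y a * rform y b / q y) x"
proof (cases "q x > 0")
  case True
  then show ?thesis by (intro continuous_intros isCont_rform isCont_q) auto
next
  case False
  \<comment> \<open>each factor rform y _ is O(q y) by Cauchy-Schwarz, so the quotient is O(q y)\<close>
  then have "q x = 0" using q_nonneg[of x] by simp
  then have vanishes: "rform x a * rform x b / q x = 0" by simp
  have bound: "norm (rform y a * rform y b / q y) \<le> q a * q b * q y" for y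
  proof (cases "q y = 0")
    case True
    then show ?thesis using q_nonneg[of a] q_nonneg[of b] by simp
  next
    case False
    then have "q y > 0" using q_nonneg[of y] by simp
    have "\<bar>rform y a * rform y b\<bar> \<le> (q y * q a) * (q y * q b)"
      unfolding abs_mult
      by (intro mult_mono rform_le_q_mult_q) (auto intro: mult_nonneg_nonneg q_nonneg)
    then show ?thesis
      using \<open>q y > 0\<close> by (simp add: abs_divide divide_le_eq mult_ac)
  qed
  have "((\<lambda>y. q a * q b * q y) \<longlongrightarrow> 0) (at x)"
    using isCont_q[of x] \<open>q x = 0\<close> unfolding isCont_def by (auto intro: tendsto_eq_intros)
  from Lim_null_comparison[OF always_eventually[OF allI[OF bound]] this]
  show ?thesis unfolding isCont_def vanishes .
qed

lemma isCont_hess: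
  assumes "x \<noteq> 0"
  shows "isCont hess x"
proof -
  have "isCont (\<lambda>y. hess_map y a $ i) x" for a i
  proof -
    define \<sigma> where "\<sigma> y = rform y a * rform y (axis i 1) / q y" for y
    have "isCont \<sigma> x"
      unfolding \<sigma>_def[abs_def] by (rule isCont_rform_mult_rform_div_q)
    have "hess_map y a $ i = K y / B y * (rvec a $ i + (a$z + g * q y * rform y a / B y) * eZ $ i
        - (rform y a + y$z * a$z) / B y * W y $ i - g * y$z / B y * \<sigma> y)" for y
      by (simp add: hess_map_def rvec_nth \<sigma>_def)
    moreover have "isCont (\<lambda>y. K y / B y * (rvec a $ i + (a$z + g * q y * rform y a / B y) * eZ $ i
        - (rform y a + y$z * a$z) / B y * W y $ i - g * y$z / B y * \<sigma> y)) x"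
      using B_pos[OF assms]
      by (intro continuous_intros isCont_K isCont_B isCont_q isCont_W isCont_rform \<open>isCont \<sigma> x\<close>) auto
    ultimately show ?thesis by simp
  qed
  then show ?thesis
    unfolding hess_def matrix_def isCont_def by (auto intro!: tendsto_vec_lambda)
qed

definition transverse :: "real^'n \<Rightarrow> real^'n" where
  "transverse y = y - (y$z) *\<^sub>R eZ"

lemma linear_transverse: "linear transverse"
  by (rule linearI) (auto simp: transverse_def algebra_simps)

lemma transverse_eq_0_iff: "transverse y = 0 \<longleftrightarrow> q y = 0"
  by (auto simp: transverse_def q_eq_0_iff vec_eq_iff eZ_def axis_def)

lemma transverse_nonzero: "\<exists>w. transverse w \<noteq> 0"
proof -
  have "\<not> UNIV \<subseteq> {z}"
    using card_ge_2 card_mono[of "{z}" UNIV] by auto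
  then obtain a where "a \<noteq> z" by blast
  then have "q (axis a 1) \<noteq> 0" by (auto simp: q_eq_0_iff intro!: exI[of _ a])
  then show ?thesis using transverse_eq_0_iff by blast
qed

lemma has_derivative_K:
  assumes "x \<noteq> 0"
  shows "(K has_derivative (\<lambda>v. v \<bullet> grad x)) (at x)"
proof (cases "q x > 0")
  case True
  then show ?thesis by (rule has_derivative_K_off_axis)
next
  case False
  obtain w where "transverse w \<noteq> 0" using transverse_nonzero by blast
  show ?thesis
  proof (rule has_derivative_across_kernel[OF linear_transverse _ \<open>transverse w \<noteq> 0\<close> open_Compl[OF closed_singleton[of 0]]])
    show "transverse x = 0" using False q_nonneg[of x] by (simp add: transverse_eq_0_iff)
    show "(K has_derivative (\<lambda>v. v \<bullet> grad y)) (at y)" if "transverse y \<noteq> 0" for y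
      using that q_nonneg[of y] by (intro has_derivative_K_off_axis) (simp add: transverse_eq_0_iff)
    fix e :: real assume "e > 0"
    then obtain d where "d > 0" and d: "\<And>y. dist y x < d \<Longrightarrow> dist (grad y) (grad x) < e"
      using isCont_grad[OF assms] unfolding continuous_at_eps_delta by blast
    have "\<bar>v \<bullet> grad y - v \<bullet> grad x\<bar> \<le> e * norm v" if "norm (y - x) < d" for y v
    proof -
      have "\<bar>v \<bullet> grad y - v \<bullet> grad x\<bar> \<le> norm v * norm (grad y - grad x)"
        using Cauchy_Schwarz_ineq2[of v "grad y - grad x"] by (simp add: inner_diff_right)
      also have "\<dots> \<le> norm v * e"
        using d[of y] that by (intro mult_left_mono) (auto simp: dist_norm)
      finally show ?thesis by (simp add: mult.commute)
    qed
    then show "\<exists>d>0. \<forall>y\<in>- {0}. transverse y \<noteq> 0 \<longrightarrow> norm (y - x) < d \<longrightarrow>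
        (\<forall>v. norm (v \<bullet> grad y - v \<bullet> grad x) \<le> e * norm v)"
      using \<open>d > 0\<close> by auto
  qed (use assms in \<open>auto intro: continuous_on_K bounded_linear_inner_left\<close>)
qed

lemma has_derivative_grad:
  assumes "x \<noteq> 0"
  shows "(grad has_derivative (\<lambda>v. hess x *v v)) (at x)"
proof (cases "q x > 0")
  case True
  then show ?thesis by (rule has_derivative_grad_off_axis)
next
  case False
  obtain w where "transverse w \<noteq> 0" using transverse_nonzero by blast
  define c where "c = real CARD('n) * real CARD('n)"
  have "c > 0" by (simp add: c_def)
  show ?thesis
  proof (rule has_derivative_across_kernel[OF linear_transverse _ \<open>transverse w \<noteq> 0\<close> open_Compl[OF closed_singleton[of 0]]])
    show "transverse x = 0" using False q_nonneg[of x] by (simp add: transverse_eq_0_iff)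
    show "continuous_on (- {0}) grad"
      by (intro continuous_at_imp_continuous_on ballI isCont_grad) auto
    show "(grad has_derivative (\<lambda>v. hess y *v v)) (at y)" if "transverse y \<noteq> 0" for y
      using that q_nonneg[of y] by (intro has_derivative_grad_off_axis) (simp add: transverse_eq_0_iff)
    fix e :: real assume "e > 0"
    then obtain d where "d > 0" and d: "\<And>y. dist y x < d \<Longrightarrow> dist (hess y) (hess x) < e / c"
      using isCont_hess[OF assms] \<open>c > 0\<close> unfolding continuous_at_eps_delta
      by (metis divide_pos_pos)
    have "norm (hess y *v v - hess x *v v) \<le> e * norm v" if "norm (y - x) < d" for y v
    proof -
      have "norm (hess y *v v - hess x *v v) \<le> c * norm (hess y - hess x) * norm v"
        using norm_matrix_vector_mult_le[of "hess y - hess x" v]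
        by (simp add: c_def matrix_vector_mult_diff_rdistrib)
      also have "\<dots> \<le> e * norm v"
        using d[of y] that \<open>c > 0\<close> by (intro mult_right_mono) (auto simp: dist_norm field_simps)
      finally show ?thesis .
    qed
    then show "\<exists>d>0. \<forall>y\<in>- {0}. transverse y \<noteq> 0 \<longrightarrow> norm (y - x) < d \<longrightarrow>
        (\<forall>v. norm (hess y *v v - hess x *v v) \<le> e * norm v)"
      using \<open>d > 0\<close> by auto
  qed (use assms in auto)
qed

section \<open>The indicatrix\<close>

lemma inner_grad_eq_0_iff:
  assumes "x \<noteq> 0"
  shows "v \<bullet> grad x = 0 \<longleftrightarrow> rform x v = - (x$z + g * q x) * v$z"
  using K_pos[OF assms] B_pos[OF assms] by (auto simp: inner_grad_right) (auto simp: algebra_simps)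

lemma inner_hess_tangent:
  assumes "x \<noteq> 0" and "v \<bullet> grad x = 0"
  shows "v \<bullet> (hess x *v v) = K x / B x * (rform v v + (v$z)\<^sup>2 * (1 - g * (x$z + g * q x) / q x))"
proof -
  define \<rho> where "\<rho> = rform x v"
  have "v \<bullet> W x = 0"
    using assms K_pos[OF assms(1)] B_pos[OF assms(1)] by (simp add: grad_def)
  then have raw: "v \<bullet> (hess x *v v) = K x / B x *
      (rform v v + (v$z)\<^sup>2 + g / B x * (q x * \<rho> * v$z - x$z * \<rho> * (\<rho> / q x)))"
    by (simp add: hess_mult_vector hess_map_def inner_diff_right inner_add_right inner_rvec_right
        \<rho>_def power2_eq_square algebra_simps diff_divide_distrib add_divide_distrib)
  have singular: "g / B x * (q x * \<rho> * v$z - x$z * \<rho> * (\<rho> / q x))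
      = - (v$z)\<^sup>2 * g * (x$z + g * q x) / q x"
  proof (cases "q x = 0")
    case True
    then show ?thesis by (simp add: \<rho>_def q_eq_0_iff rform_eq_0_if)
  next
    case False
    have \<rho>_eq: "\<rho> = - (x$z + g * q x) * v$z"
      using inner_grad_eq_0_iff[OF assms(1)] assms(2) by (simp add: \<rho>_def)
    \<comment> \<open>after this substitution the factor q^2 + Z (Z + g q) = B appears\<close>
    have "q x * \<rho> * v$z - x$z * \<rho> * (\<rho> / q x) = - ((x$z + g * q x) * (v$z)\<^sup>2 / q x) * B x"
      using False unfolding \<rho>_eq by (simp add: fB_def field_simps power2_eq_square)
    then show ?thesis
      using B_pos[OF assms(1)] by simp
  qed
  show ?thesis
    unfolding raw singular by (simp add: algebra_simps add_divide_distrib diff_divide_distrib)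
qed

lemma inner_hess_tangent_pos:
  assumes "x \<noteq> 0" and "v \<noteq> 0" and "v \<bullet> grad x = 0"
  shows "v \<bullet> (hess x *v v) > 0"
proof -
  define s where "s = x$z + g * q x"
  have tangent: "rform x v = - s * v$z"
    using inner_grad_eq_0_iff[OF assms(1)] assms(3) by (simp add: s_def)
  have "rform v v + (v$z)\<^sup>2 * (1 - g * s / q x) > 0"
  proof (cases "v$z = 0")
    case True
    then have "rform v v > 0"
      using assms(2) rform_self_pos[of v] by (metis vec_eq_iff zero_index)
    then show ?thesis using True by simp
  next
    case False
    have "q x > 0"
    proof (rule ccontr)
      assume "\<not> q x > 0"
      then have "q x = 0" using q_nonneg[of x] by simp
      have "x$z \<noteq> 0" using q_pos_or_z_ne_0[OF assms(1)] \<open>q x = 0\<close> by simp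
      moreover have "rform x v = 0" using \<open>q x = 0\<close> by (simp add: q_eq_0_iff rform_eq_0_if)
      ultimately show False using tangent False \<open>q x = 0\<close> by (simp add: s_def)
    qed
    have "(s * v$z)\<^sup>2 \<le> (q x)\<^sup>2 * rform v v"
      using rform_Cauchy_Schwarz[of x v] tangent unfolding q_sq[symmetric] by simp
    then have lower: "rform v v \<ge> (s * v$z / q x)\<^sup>2"
      using \<open>q x > 0\<close> by (simp add: power_divide field_simps)
    have "(q x)\<^sup>2 - g * s * q x + s\<^sup>2 = (s - g * q x / 2)\<^sup>2 + h\<^sup>2 * (q x)\<^sup>2"
      unfolding h_sq by (simp add: power2_eq_square algebra_simps)
    moreover have "h\<^sup>2 * (q x)\<^sup>2 > 0" using \<open>q x > 0\<close> h_pos by simp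
    ultimately have "(q x)\<^sup>2 - g * s * q x + s\<^sup>2 > 0"
      by (metis add_nonneg_pos zero_le_power2)
    then have "(v$z)\<^sup>2 * ((q x)\<^sup>2 - g * s * q x + s\<^sup>2) / (q x)\<^sup>2 > 0"
      using False \<open>q x > 0\<close> by simp
    also have "\<dots> = (v$z)\<^sup>2 * (1 - g * s / q x) + (s * v$z / q x)\<^sup>2"
      using \<open>q x > 0\<close> by (simp add: field_simps power2_eq_square)
    finally show ?thesis using lower by linarith
  qed
  then show ?thesis
    using K_pos[OF assms(1)] B_pos[OF assms(1)] by (simp add: inner_hess_tangent[OF assms(1,3)] s_def)
qed

lemma K_ge_mult_norm: "\<exists>m>0. \<forall>x. m * norm x \<le> K x"
proof -
  have "axis z 1 \<in> sphere (0::real^'n) 1" by simp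
  then obtain p where p: "p \<in> sphere 0 1" and p_min: "\<And>y. y \<in> sphere 0 1 \<Longrightarrow> K p \<le> K y"
    using continuous_attains_inf[OF compact_sphere _ continuous_on_K] by blast
  have "K p > 0" using p by (intro K_pos) auto
  moreover have "K p * norm x \<le> K x" for x
  proof (cases "x = 0")
    case False
    then have "K p \<le> K (inverse (norm x) *\<^sub>R x)" by (intro p_min) simp
    also have "\<dots> = K x / norm x" using False by (simp add: K_scale divide_inverse_commute)
    finally show ?thesis using False by (simp add: field_simps)
  qed simp
  ultimately show ?thesis by blast
qed

lemma compact_sublevel: "compact {x. K x \<le> c}"
proof -
  obtain m where "m > 0" and m: "\<And>x. m * norm x \<le> K x" using K_ge_mult_norm by blast
  have "bounded {x. K x \<le> c}"
  proof (rule boundedI)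
    fix x assume "x \<in> {x. K x \<le> c}"
    then show "norm x \<le> c / m" using m[of x] \<open>m > 0\<close> by (simp add: field_simps)
  qed
  moreover have "closed {x. K x \<le> c}"
    by (intro closed_Collect_le continuous_on_K continuous_on_const)
  ultimately show ?thesis by (simp add: compact_eq_bounded_closed)
qed

lemma level_set_nonempty: "{x. K x = 1} \<noteq> {}"
proof -
  have "K eZ > 0" by (intro K_pos) (simp add: eZ_def)
  then have "K (inverse (K eZ) *\<^sub>R eZ) = 1" by (simp add: K_scale)
  then show ?thesis by blast
qed

lemma interior_sublevel: "interior {x. K x \<le> 1} = {x. K x < 1}"
proof
  show "{x. K x < 1} \<subseteq> interior {x. K x \<le> 1}"
    by (intro interior_maximal open_Collect_less continuous_on_K continuous_on_const) auto
  show "interior {x. K x \<le> 1} \<subseteq> {x. K x < 1}"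
  proof
    fix x assume "x \<in> interior {x. K x \<le> 1}"
    then obtain e where "e > 0" and ball: "ball x e \<subseteq> {x. K x \<le> 1}"
      using mem_interior by blast
    have "K x \<le> 1" using \<open>x \<in> interior _\<close> interior_subset by blast
    show "x \<in> {x. K x < 1}"
    proof (rule ccontr)
      \<comment> \<open>by homogeneity, moving off a point of the level set radially increases K\<close>
      assume "x \<notin> {x. K x < 1}"
      then have "K x = 1" using \<open>K x \<le> 1\<close> by simp
      then have "x \<noteq> 0" by auto
      define t where "t = e / (2 * norm x)"
      have "t > 0" using \<open>e > 0\<close> \<open>x \<noteq> 0\<close> by (simp add: t_def)
      have "dist x ((1 + t) *\<^sub>R x) < e"
        using \<open>e > 0\<close> \<open>x \<noteq> 0\<close> by (simp add: dist_norm algebra_simps t_def)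
      then have "K ((1 + t) *\<^sub>R x) \<le> 1" using ball by auto
      moreover have "K ((1 + t) *\<^sub>R x) = 1 + t"
        using \<open>t > 0\<close> \<open>K x = 1\<close> by (simp add: K_scale)
      ultimately show False using \<open>t > 0\<close> by simp
    qed
  qed
qed

lemma frontier_sublevel: "frontier {x. K x \<le> 1} = {x. K x = 1}"
proof -
  have "closed {x. K x \<le> 1}"
    by (intro closed_Collect_le continuous_on_K continuous_on_const)
  then show ?thesis
    unfolding frontier_def interior_sublevel by (auto simp: closure_closed)
qed

lemma grad_nonzero: "x \<noteq> 0 \<Longrightarrow> grad x \<noteq> 0"
  using inner_grad_self_eq_K[of x] K_pos[of x] by auto

lemma continuous_on_hess: "continuous_on (- {0}) hess"
  by (intro continuous_at_imp_continuous_on ballI isCont_hess) auto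

lemma inward_gradient:
  assumes "K x = 1"
  shows "\<exists>e>0. \<forall>t. 0 < t \<and> t < e \<longrightarrow> x - t *\<^sub>R grad x \<in> interior {x. K x \<le> 1}"
proof -
  have "x \<noteq> 0" using assms by auto
  have "((\<lambda>t. x + t *\<^sub>R (- grad x)) has_derivative (\<lambda>t. t *\<^sub>R (- grad x))) (at 0)"
    by (auto intro!: derivative_eq_intros)
  moreover have "(K has_derivative (\<lambda>v. v \<bullet> grad x)) (at (x + 0 *\<^sub>R (- grad x)))"
    using has_derivative_K[OF \<open>x \<noteq> 0\<close>] by simp
  ultimately have "((\<lambda>t. K (x + t *\<^sub>R (- grad x))) has_derivative (\<lambda>t. (t *\<^sub>R (- grad x)) \<bullet> grad x)) (at 0)"
    by (rule has_derivative_compose[of "\<lambda>t. x + t *\<^sub>R (- grad x)", unfolded o_def])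
  then have "((\<lambda>t. K (x + t *\<^sub>R (- grad x))) has_real_derivative (- grad x \<bullet> grad x)) (at 0)"
    unfolding has_field_derivative_def by (rule has_derivative_eq_rhs) auto
  from DERIV_neg_dec_right[OF this] grad_nonzero[OF \<open>x \<noteq> 0\<close>]
  show ?thesis using assms by (auto simp: interior_sublevel)
qed

lemma level_sff_pos:
  assumes "x \<noteq> 0" and "v \<noteq> 0" and "v \<bullet> grad x = 0"
  shows "level_sff grad hess x v > 0"
  using inner_hess_tangent_pos[OF assms] grad_nonzero[OF assms(1)] by (simp add: level_sff_def)

end

theorem theorem2p11:
  fixes z :: "'n::finite" and r :: "'n \<Rightarrow> 'n \<Rightarrow> real" and g :: real
  assumes "CARD('n) \<ge> 2"
    and "sym_posdef_off z r"
    and "-2 < g" and "g < 2"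
  defines "K \<equiv> finsleroid_K z r g"
  defines "S \<equiv> {R. K R = 1}"
  defines "C \<equiv> {R. K R \<le> 1}"
  shows "compact S \<and> S \<noteq> {}
    \<and> convex C \<and> compact C \<and> interior C \<noteq> {} \<and> frontier C = S
    \<and> (\<exists>U grad hess. open U \<and> S \<subseteq> U
         \<and> (\<forall>x\<in>U. (K has_derivative (\<lambda>v. v \<bullet> grad x)) (at x)
                  \<and> (grad has_derivative (\<lambda>v. hess x *v v)) (at x))
         \<and> continuous_on U hess
         \<and> (\<forall>x\<in>S. grad x \<noteq> 0)
         \<and> (\<forall>x\<in>S. \<exists>e>0. \<forall>t. 0 < t \<and> t < e \<longrightarrow> x - t *\<^sub>R grad x \<in> interior C)
         \<and> (\<forall>x\<in>S. \<forall>v. v \<noteq> 0 \<and> v \<bullet> grad x = 0 \<longrightarrow> level_sff grad hess x v > 0))"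
proof -
  interpret finsleroid z r g
    using assms by unfold_locales auto
  have "interior {x. finsleroid_K z r g x \<le> 1} \<noteq> {}"
    by (auto simp: interior_sublevel intro!: exI[of _ 0])
  moreover have "compact {x. finsleroid_K z r g x = 1}"
    using compact_frontier[OF compact_sublevel[of 1]] by (simp add: frontier_sublevel)
  moreover have "x \<noteq> 0" if "finsleroid_K z r g x = 1" for x
    using that by auto
  ultimately show ?thesis
    unfolding S_def C_def K_def
    using level_set_nonempty convex_sublevel compact_sublevel frontier_sublevel
      has_derivative_K has_derivative_grad continuous_on_hess grad_nonzero inward_gradient level_sff_pos
    by (intro conjI exI[of _ "- {0}"] exI[of _ grad] exI[of _ hess]) auto
qed

end
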